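(* Let $(A,f)$ be a finite-dimensional quadratic Lie algebra over a field $\mathbb{K}$ of characteristic zero, let $d$ be an $f$-skew-symmetric derivation of $A$, and let $(A_b,f_b)$ be the one-dimensional double extension of $(A,f)$ by $(b,d)$. Then $A_b$ is reduced if and only if $d$ is not an inner derivation of $A$, $A_b^2=(\mathrm{im}\,d+A^2)\oplus\mathbb{K}\beta$, and $Z(A)\cap\ker d\subseteq \mathrm{im}\,d+A^2$.
   Context: A quadratic Lie algebra $(A,f)$ is a Lie algebra with a non-degenerate symmetric bilinear form $f$ satisfying $f([x,y],z)+f(y,[x,z])=0$. A derivation $d$ is $f$-skew-symmetric if $f(d(x),y)+f(x,d(y))=0$ for all $x,y$. The one-dimensional double extension of $(A,f)$ by $(b,d)$ is the vector space $A_b=\mathbb{K}b\oplus A\oplus\mathbb{K}\beta$ with bracket $[\lambda b+a+\mu\beta,\lambda' b+a'+\mu'\beta]=\lambda d(a')-\lambda' d(a)+[a,a']_A+f(d(a),a')\beta$ and symmetric form $f_b(\lambda b+a+\mu\beta,\lambda' b+a'+\mu'\beta)=\lambda\mu'+\lambda'\mu+f(a,a')$. A Lie algebra $L$ is reduced if $Z(L)\subseteq L^2=[L,L]$. *)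

theory Defs
  imports Complex_Main "HOL-Library.Product_Plus"
begin

definition lie_algebra :: "('k::field \<Rightarrow> 'a::ab_group_add \<Rightarrow> 'a) \<Rightarrow> ('a \<Rightarrow> 'a \<Rightarrow> 'a) \<Rightarrow> bool" where
  "lie_algebra s br \<longleftrightarrow> vector_space s
     \<and> (\<forall>x. Vector_Spaces.linear s s (br x))
     \<and> (\<forall>y. Vector_Spaces.linear s s (\<lambda>x. br x y))
     \<and> (\<forall>x. br x x = 0)
     \<and> (\<forall>x y z. br x (br y z) + br y (br z x) + br z (br x y) = 0)"

definition finite_dim :: "('k::field \<Rightarrow> 'a::ab_group_add \<Rightarrow> 'a) \<Rightarrow> bool" where
  "finite_dim s \<longleftrightarrow> (\<exists>B. finite_dimensional_vector_space s B)"

definition quadratic_lie_algebra ::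
  "('k::field \<Rightarrow> 'a::ab_group_add \<Rightarrow> 'a) \<Rightarrow> ('a \<Rightarrow> 'a \<Rightarrow> 'a) \<Rightarrow> ('a \<Rightarrow> 'a \<Rightarrow> 'k) \<Rightarrow> bool" where
  "quadratic_lie_algebra s br f \<longleftrightarrow> lie_algebra s br
     \<and> (\<forall>x. Vector_Spaces.linear s (*) (f x))
     \<and> (\<forall>x y. f x y = f y x)
     \<and> (\<forall>x. (\<forall>y. f x y = 0) \<longrightarrow> x = 0)
     \<and> (\<forall>x y z. f (br x y) z + f y (br x z) = 0)"

definition derivation :: "('k::field \<Rightarrow> 'a::ab_group_add \<Rightarrow> 'a) \<Rightarrow> ('a \<Rightarrow> 'a \<Rightarrow> 'a) \<Rightarrow> ('a \<Rightarrow> 'a) \<Rightarrow> bool" where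
  "derivation s br d \<longleftrightarrow> Vector_Spaces.linear s s d \<and> (\<forall>x y. d (br x y) = br (d x) y + br x (d y))"

definition skew_symmetric :: "('a \<Rightarrow> 'a \<Rightarrow> 'k::field) \<Rightarrow> ('a \<Rightarrow> 'a) \<Rightarrow> bool" where
  "skew_symmetric f d \<longleftrightarrow> (\<forall>x y. f (d x) y + f x (d y) = 0)"

definition inner_derivation :: "('a \<Rightarrow> 'a \<Rightarrow> 'a) \<Rightarrow> ('a \<Rightarrow> 'a) \<Rightarrow> bool" where
  "inner_derivation br d \<longleftrightarrow> (\<exists>a. d = br a)"

definition derived :: "('k::field \<Rightarrow> 'a::ab_group_add \<Rightarrow> 'a) \<Rightarrow> ('a \<Rightarrow> 'a \<Rightarrow> 'a) \<Rightarrow> 'a set" where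
  "derived s br = module.span s {br x y | x y. True}"

definition center :: "('a \<Rightarrow> 'a \<Rightarrow> 'a::zero) \<Rightarrow> 'a set" where
  "center br = {z. \<forall>x. br z x = 0}"

definition reduced :: "('k::field \<Rightarrow> 'a::ab_group_add \<Rightarrow> 'a) \<Rightarrow> ('a \<Rightarrow> 'a \<Rightarrow> 'a) \<Rightarrow> bool" where
  "reduced s br \<longleftrightarrow> center br \<subseteq> derived s br"

(* The one-dimensional double extension A_b = K b \<oplus> A \<oplus> K beta, with elements
   written as triples (lambda, a, mu) = lambda b + a + mu beta. *)
definition dext_scale :: "('k::field \<Rightarrow> 'a::ab_group_add \<Rightarrow> 'a) \<Rightarrow> 'k \<Rightarrow> 'k \<times> 'a \<times> 'k \<Rightarrow> 'k \<times> 'a \<times> 'k" where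
  "dext_scale s c = (\<lambda>(l, a, m). (c * l, s c a, c * m))"

definition dext_bracket ::
  "('k::field \<Rightarrow> 'a::ab_group_add \<Rightarrow> 'a) \<Rightarrow> ('a \<Rightarrow> 'a \<Rightarrow> 'a) \<Rightarrow> ('a \<Rightarrow> 'a \<Rightarrow> 'k) \<Rightarrow> ('a \<Rightarrow> 'a)
     \<Rightarrow> 'k \<times> 'a \<times> 'k \<Rightarrow> 'k \<times> 'a \<times> 'k \<Rightarrow> 'k \<times> 'a \<times> 'k" where
  "dext_bracket s br f d = (\<lambda>(l, a, m) (l', a', m').
      (0, s l (d a') - s l' (d a) + br a a', f (d a) a'))"

definition dext_form :: "('a \<Rightarrow> 'a \<Rightarrow> 'k::field) \<Rightarrow> 'k \<times> 'a \<times> 'k \<Rightarrow> 'k \<times> 'a \<times> 'k \<Rightarrow> 'k" where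
  "dext_form f = (\<lambda>(l, a, m) (l', a', m'). l * m' + l' * m + f a a')"

end

theory Submission
  imports Defs
begin

(* In A_b every bracket has the form (0, d u + [a,a'], f(d a, a')), so A_b^2 lies in
   (im d + A^2) + K beta, contains im d (as [b, a] = d a) and contains the elements
   [a,a'] + f(d a, a') beta.  Since beta is central, reducedness forces beta into A_b^2,
   and then A_b^2 is all of (im d + A^2) + K beta.  For the centre, nondegeneracy of f shows
   that a central element lambda b + a + mu beta has d a = 0 and lambda d = ad(-a); so
   lambda <> 0 makes d inner, and otherwise the centre is (Z(A) \<inter> ker d) + K beta. *)

abbreviation range_plus_derived ::
    "('k::field \<Rightarrow> 'a::ab_group_add \<Rightarrow> 'a) \<Rightarrow> ('a \<Rightarrow> 'a \<Rightarrow> 'a) \<Rightarrow> ('a \<Rightarrow> 'a) \<Rightarrow> 'a set" where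
  "range_plus_derived s br d \<equiv> {u + v | u v. u \<in> range d \<and> v \<in> derived s br}"

lemma dext_scale_simp [simp]: "dext_scale s c (l, a, m) = (c * l, s c a, c * m)"
  by (simp add: dext_scale_def)

lemma dext_bracket_simp [simp]:
  "dext_bracket s br f d (l, a, m) (l', a', m') = (0, s l (d a') - s l' (d a) + br a a', f (d a) a')"
  by (simp add: dext_bracket_def)

lemma vector_space_dext_scale:
  assumes "vector_space s"
  shows "vector_space (dext_scale s)"
proof -
  interpret vector_space s by fact
  show ?thesis
    unfolding vector_space_def dext_scale_def
    by (auto simp: algebra_simps split: prod.splits)
qed

locale double_extension =
  fixes s :: "'k::field \<Rightarrow> 'a::ab_group_add \<Rightarrow> 'a"
    and br :: "'a \<Rightarrow> 'a \<Rightarrow> 'a"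
    and f :: "'a \<Rightarrow> 'a \<Rightarrow> 'k"
    and d :: "'a \<Rightarrow> 'a"
  assumes quadratic: "quadratic_lie_algebra s br f"
    and derivation: "derivation s br d"
begin

abbreviation ext_bracket where "ext_bracket \<equiv> dext_bracket s br f d"
abbreviation ext_derived where "ext_derived \<equiv> derived (dext_scale s) ext_bracket"

lemma lie_algebra_br: "lie_algebra s br"
  using quadratic by (simp add: quadratic_lie_algebra_def)

sublocale A: vector_space s
  using lie_algebra_br by (simp add: lie_algebra_def)

sublocale Ab: vector_space "dext_scale s"
  by (rule vector_space_dext_scale) unfold_locales

sublocale d: Vector_Spaces.linear s s d
  using derivation by (simp add: derivation_def)

lemma linear_bracket_left: "Vector_Spaces.linear s s (\<lambda>x. br x y)"
  using lie_algebra_br by (simp add: lie_algebra_def)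

lemma bracket_zero_left [simp]: "br 0 y = 0"
  and bracket_minus_left: "br (- x) y = - br x y"
  and bracket_scale_left: "br (s c x) y = s c (br x y)"
proof -
  interpret Vector_Spaces.linear s s "\<lambda>x. br x y"
    by (rule linear_bracket_left)
  show "br 0 y = 0" "br (- x) y = - br x y" "br (s c x) y = s c (br x y)"
    using zero neg scale by simp_all
qed

lemma bracket_self [simp]: "br x x = 0"
  using lie_algebra_br by (simp add: lie_algebra_def)

lemma form_zero_left [simp]: "f 0 y = 0"
proof -
  interpret Vector_Spaces.linear s "(*)" "f y"
    using quadratic by (simp add: quadratic_lie_algebra_def)
  have "f 0 y = f y 0"
    using quadratic unfolding quadratic_lie_algebra_def by blast
  then show ?thesis
    using zero by simp
qed

lemma form_nondegenerate: "(\<And>y. f x y = 0) \<Longrightarrow> x = 0"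
  using quadratic by (simp add: quadratic_lie_algebra_def)

lemma subspace_range_plus_derived: "A.subspace (range_plus_derived s br d)"
  unfolding derived_def
  by (intro A.subspace_sums d.subspace_image A.subspace_UNIV A.subspace_span)

lemma subspace_embed_plus_beta:
  assumes "A.subspace W"
  shows "Ab.subspace {(0, a, m) | a m. a \<in> W}"
  using A.subspace_0[OF assms] A.subspace_add[OF assms] A.subspace_scale[OF assms]
  by (auto simp: Ab.subspace_def zero_prod_def)

lemma ext_bracket_in_ext_derived: "ext_bracket x y \<in> ext_derived"
  unfolding derived_def by (rule Ab.span_base) blast

lemma subspace_ext_derived: "Ab.subspace ext_derived"
  by (simp add: derived_def)

lemma ext_derived_subset:
  "ext_derived \<subseteq> {(0, a, m) | a m. a \<in> range_plus_derived s br d}"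
  unfolding derived_def[of "dext_scale s"]
proof (rule Ab.span_minimal)
  let ?W = "range_plus_derived s br d"
  show "Ab.subspace {(0, a, m) | a m. a \<in> ?W}"
    by (rule subspace_embed_plus_beta[OF subspace_range_plus_derived])
  have "ext_bracket (l, a, m) (l', a', m') \<in> {(0, a, m) | a m. a \<in> ?W}" for l a m l' a' m'
  proof -
    have "s l (d a') - s l' (d a) = d (s l a' - s l' a)"
      by (simp add: d.diff d.scale)
    moreover have "br a a' \<in> derived s br"
      unfolding derived_def by (rule A.span_base) blast
    ultimately show ?thesis
      by (simp only: dext_bracket_simp) blast
  qed
  then show "{ext_bracket x y | x y. True} \<subseteq> {(0, a, m) | a m. a \<in> ?W}"
    by fastforce
qed

lemma range_in_ext_derived: "(0, d a, 0) \<in> ext_derived"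
  using ext_bracket_in_ext_derived[of "(1, 0, 0)" "(0, a, 0)"] by (simp add: d.zero)

lemma derived_in_ext_derived:
  assumes beta: "(0, 0, 1) \<in> ext_derived" and v: "v \<in> derived s br"
  shows "(0, v, 0) \<in> ext_derived"
proof -
  interpret embed: Vector_Spaces.linear s "dext_scale s" "\<lambda>v. (0, v, 0)"
    by unfold_locales (simp_all add: zero_prod_def)
  have "derived s br \<subseteq> (\<lambda>v. (0, v, 0)) -` ext_derived"
    unfolding derived_def[of s]
  proof (intro A.span_minimal embed.subspace_vimage subspace_ext_derived subsetI)
    fix z assume "z \<in> {br x y | x y. True}"
    then obtain x y where z: "z = br x y" by blast
    have "(0, br x y, f (d x) y) \<in> ext_derived"
      using ext_bracket_in_ext_derived[of "(0, x, 0)" "(0, y, 0)"] by simp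
    then have "(0, br x y, f (d x) y) - dext_scale s (f (d x) y) (0, 0, 1) \<in> ext_derived"
      using beta unfolding derived_def by (intro Ab.span_diff Ab.span_scale)
    then show "z \<in> (\<lambda>v. (0, v, 0)) -` ext_derived"
      by (simp add: z)
  qed
  then show ?thesis using v by blast
qed

lemma ext_derived_eq_iff:
  "ext_derived = {(0, a, m) | a m. a \<in> range_plus_derived s br d} \<longleftrightarrow> (0, 0, 1) \<in> ext_derived"
proof
  assume "ext_derived = {(0, a, m) | a m. a \<in> range_plus_derived s br d}"
  then show "(0, 0, 1) \<in> ext_derived"
    using A.subspace_0[OF subspace_range_plus_derived] by simp
next
  assume beta: "(0, 0, 1) \<in> ext_derived"
  have "(0, d u + v, m) \<in> ext_derived" if "v \<in> derived s br" for u v m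
  proof -
    have "(0, d u, 0) + (0, v, 0) + dext_scale s m (0, 0, 1) \<in> ext_derived"
      using range_in_ext_derived derived_in_ext_derived[OF beta that] beta
      unfolding derived_def by (intro Ab.span_add Ab.span_scale)
    then show ?thesis by simp
  qed
  then show "ext_derived = {(0, a, m) | a m. a \<in> range_plus_derived s br d}"
    using ext_derived_subset by blast
qed

lemma beta_in_ext_center: "(0, 0, 1) \<in> center ext_bracket"
  by (auto simp: center_def zero_prod_def d.zero)

lemma ext_center_of_inner_derivation:
  assumes "d = br c"
  shows "(1, - c, 0) \<in> center ext_bracket"
proof -
  have "d c = 0"
    using assms by simp
  then have "d (- c) = 0"
    by (simp add: d.neg)
  then show ?thesis
    using assms by (auto simp: center_def zero_prod_def bracket_minus_left)
qed

lemma ext_center_eq: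
  assumes "\<not> inner_derivation br d"
  shows "center ext_bracket = {(0, a, m) | a m. a \<in> center br \<and> d a = 0}"
proof (intro equalityI subsetI)
  fix z assume central: "z \<in> center ext_bracket"
  obtain l a m where z: "z = (l, a, m)" by (cases z)
  have bracket_zero: "s l (d a') - s l' (d a) + br a a' = 0 \<and> f (d a) a' = 0" for l' a'
  proof -
    have "ext_bracket (l, a, m) (l', a', 0) = 0"
      using central by (simp add: center_def z)
    then show ?thesis
      by (simp add: zero_prod_def)
  qed
  have "d a = 0"
    using bracket_zero by (blast intro: form_nondegenerate)
  then have ad: "s l (d a') + br a a' = 0" for a'
    using bracket_zero[where l'=0 and a'=a'] by (simp add: d.zero)
  have "l = 0"
  proof (rule ccontr)
    assume "l \<noteq> 0"
    then have "d a' = br (- s (inverse l) a) a'" for a'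
      using arg_cong[OF ad[of a'], of "s (inverse l)"]
      by (simp add: A.scale_right_distrib bracket_minus_left bracket_scale_left eq_neg_iff_add_eq_0)
    then show False
      using assms unfolding inner_derivation_def by blast
  qed
  then show "z \<in> {(0, a, m) | a m. a \<in> center br \<and> d a = 0}"
    using ad \<open>d a = 0\<close> z by (simp add: center_def)
next
  fix z :: "'k \<times> 'a \<times> 'k"
  assume "z \<in> {(0, a, m) | a m. a \<in> center br \<and> d a = 0}"
  then show "z \<in> center ext_bracket"
    by (auto simp: center_def zero_prod_def)
qed

lemma not_inner_derivation_if_ext_center_derived:
  assumes "center ext_bracket \<subseteq> ext_derived"
  shows "\<not> inner_derivation br d"
proof
  assume "inner_derivation br d"
  then obtain c where "d = br c"
    by (auto simp: inner_derivation_def)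
  then have "(1, - c, 0) \<in> ext_derived"
    using ext_center_of_inner_derivation assms by blast
  then show False
    using ext_derived_subset by auto
qed

end

theorem corollary2p9:
  fixes s :: "'k::field_char_0 \<Rightarrow> 'a::ab_group_add \<Rightarrow> 'a"
    and br :: "'a \<Rightarrow> 'a \<Rightarrow> 'a"
    and f :: "'a \<Rightarrow> 'a \<Rightarrow> 'k"
    and d :: "'a \<Rightarrow> 'a"
  assumes "quadratic_lie_algebra s br f"
    and "finite_dim s"
    and "derivation s br d"
    and "skew_symmetric f d"
  shows "reduced (dext_scale s) (dext_bracket s br f d) \<longleftrightarrow>
           (\<not> inner_derivation br d
            \<and> derived (dext_scale s) (dext_bracket s br f d)
                = {(0, a, m) | a m. a \<in> {u + v | u v. u \<in> range d \<and> v \<in> derived s br}}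
            \<and> center br \<inter> {x. d x = 0} \<subseteq> {u + v | u v. u \<in> range d \<and> v \<in> derived s br})"
proof -
  interpret double_extension s br f d
    using assms(1,3) by unfold_locales
  show ?thesis (is "_ \<longleftrightarrow> ?conditions")
  proof
    assume "reduced (dext_scale s) ext_bracket"
    then have central_derived: "center ext_bracket \<subseteq> ext_derived"
      by (simp add: reduced_def)
    have "\<not> inner_derivation br d"
      using central_derived by (rule not_inner_derivation_if_ext_center_derived)
    moreover have "ext_derived = {(0, a, m) | a m. a \<in> range_plus_derived s br d}"
      using ext_derived_eq_iff subsetD[OF central_derived beta_in_ext_center] by simp
    moreover have "center br \<inter> {x. d x = 0} \<subseteq> range_plus_derived s br d"
    proof
      fix a assume "a \<in> center br \<inter> {x. d x = 0}"
      then have "(0, a, 0) \<in> ext_derived"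
        using ext_center_eq[OF calculation(1)] central_derived by blast
      then show "a \<in> range_plus_derived s br d"
        using ext_derived_subset by blast
    qed
    ultimately show ?conditions
      by blast
  next
    assume ?conditions
    then show "reduced (dext_scale s) ext_bracket"
      unfolding reduced_def by (auto simp: ext_center_eq)
  qed
qed

end
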